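(* Let $\{\mathcal S,\mathcal C,\mathcal R,\mathcal K(t)\}$ with $\mathcal S=\{S_1,\dots,S_N\}$ be a weakly reversible non-autonomous mass-action system with bounded kinetics, and let $D\subset\mathbb R^N_{>0}$. Then at least one of the following holds. (C1) There exists $M>0$ such that for every $x\in D$ having $x_i>M$ or $x_i<1/M$ for at least one $i\in\{1,\dots,N\}$, $$\sum_k\kappa_k(t)\,x^{y_k}(y_k'-y_k)\cdot\ln(x)<0\quad\text{for all }t\ge0.$$ (C2) There exists a sequence $\{x_n\}\subset D$ with $\lim_{n\to\infty}x_{n,i}\in\{0,\infty\}$ for at least one $i$, such that $\mathcal C$ is partitioned along $\{x_n\}$ with tiers $T_1,\dots,T_P$ and some constant $C$, and $T_1$ is a union of linkage classes.
   Context: A chemical reaction network on species $S_1,\dots,S_N$ consists of a finite set $\mathcal C\subset\mathbb Z^N_{\ge0}$ of complexes and a finite set $\mathcal R$ of reactions $y\to y'$ with $y,y'\in\mathcal C$, $y\ne y'$, such that every species has positive coefficient in some complex and every complex appears in some reaction. Reactions are enumerated $y_k\to y_k'$, $k=1,\dots,|\mathcal R|$. The reaction diagram is the directed graph with vertex set $\mathcal C$ and an edge $y\to y'$ for each reaction; its connected components are the linkage classes. $T\subset\mathcal C$ is a union of linkage classes if it is the union of the complex sets of some nonempty collection of linkage classes. The network is weakly reversible if each linkage class is strongly connected. A non-autonomous mass-action system with bounded kinetics is such a network together with functions $\kappa_k:[0,\infty)\to\mathbb R$ and a constant $\eta>0$ with $\eta<\kappa_k(t)<1/\eta$ for all $t\ge0$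 and all $k$, with dynamics $\dot x(t)=\sum_k\kappa_k(t)x(t)^{y_k}(y_k'-y_k)$. For $u\in\mathbb R^N_{\ge0}$, $v\in\mathbb R^N$, $u^v=\prod_iu_i^{v_i}$ ($0^0=1$); $\ln(x)=(\ln x_1,\dots,\ln x_N)$. $\mathcal C$ is partitioned along $\{x_n\}$ if there exist a partition $\{T_i\}_{i=1}^P$ of $\mathcal C$ into nonempty disjoint tiers and $C>1$ such that (i) $y_j,y_k\in T_i$ implies $\frac1Cx_n^{y_j}\le x_n^{y_k}\le Cx_n^{y_j}$ for all $n$, and (ii) $y_j\in T_i$, $y_k\in T_{i+m}$, $m\ge1$ implies $x_n^{y_j}/x_n^{y_k}\to\infty$. *)

theory Defs
  imports "HOL-Analysis.Analysis"
begin

type_synonym 'n complex = "'n \<Rightarrow> nat"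
type_synonym 'n reaction = "'n complex \<times> 'n complex"

definition crn :: "'n::finite complex set \<Rightarrow> 'n reaction set \<Rightarrow> bool" where
  "crn C R \<longleftrightarrow> finite C \<and> finite R \<and>
     (\<forall>(y, y') \<in> R. y \<in> C \<and> y' \<in> C \<and> y \<noteq> y') \<and>
     (\<forall>i. \<exists>y \<in> C. y i > 0) \<and>
     (\<forall>y \<in> C. \<exists>(a, b) \<in> R. y = a \<or> y = b)"

text \<open>x^y = prod_i x_i^{y_i} (with 0^0 = 1).\<close>
definition mpow :: "('n::finite \<Rightarrow> real) \<Rightarrow> 'n complex \<Rightarrow> real" where
  "mpow x y = (\<Prod>i\<in>UNIV. x i ^ y i)"

definition linked :: "'n reaction set \<Rightarrow> 'n complex \<Rightarrow> 'n complex \<Rightarrow> bool" where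
  "linked R y y' \<longleftrightarrow> (y, y') \<in> (R \<union> R\<inverse>)\<^sup>*"

definition weakly_reversible :: "'n reaction set \<Rightarrow> bool" where
  "weakly_reversible R \<longleftrightarrow> (\<forall>y y'. linked R y y' \<longrightarrow> (y, y') \<in> R\<^sup>*)"

definition union_of_linkage_classes ::
  "'n complex set \<Rightarrow> 'n reaction set \<Rightarrow> 'n complex set \<Rightarrow> bool" where
  "union_of_linkage_classes C R T \<longleftrightarrow> T \<noteq> {} \<and> T \<subseteq> C \<and>
     (\<forall>y \<in> T. \<forall>y'. linked R y y' \<longrightarrow> y' \<in> T)"

definition bounded_kinetics ::
  "'n reaction set \<Rightarrow> ('n reaction \<Rightarrow> real \<Rightarrow> real) \<Rightarrow> real \<Rightarrow> bool" where
  "bounded_kinetics R \<kappa> \<eta> \<longleftrightarrow> \<eta> > 0 \<and>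
     (\<forall>r \<in> R. \<forall>t \<ge> 0. \<eta> < \<kappa> r t \<and> \<kappa> r t < 1 / \<eta>)"

definition mass_action_field ::
  "'n::finite reaction set \<Rightarrow> ('n reaction \<Rightarrow> real \<Rightarrow> real) \<Rightarrow> real \<Rightarrow> ('n \<Rightarrow> real) \<Rightarrow> ('n \<Rightarrow> real)" where
  "mass_action_field R \<kappa> t x =
     (\<lambda>i. \<Sum>r\<in>R. \<kappa> r t * mpow x (fst r) * (real (snd r i) - real (fst r i)))"

definition dotp :: "('n::finite \<Rightarrow> real) \<Rightarrow> ('n \<Rightarrow> real) \<Rightarrow> real" where
  "dotp u v = (\<Sum>i\<in>UNIV. u i * v i)"

definition partitioned_along ::
  "'n::finite complex set \<Rightarrow> (nat \<Rightarrow> 'n \<Rightarrow> real) \<Rightarrow> nat \<Rightarrow> (nat \<Rightarrow> 'n complex set) \<Rightarrow> real \<Rightarrow> bool" where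
  "partitioned_along C xs P T K \<longleftrightarrow> P \<ge> 1 \<and> K > 1 \<and>
     (\<forall>i\<in>{1..P}. T i \<noteq> {}) \<and>
     (\<forall>i\<in>{1..P}. \<forall>j\<in>{1..P}. i \<noteq> j \<longrightarrow> T i \<inter> T j = {}) \<and>
     (\<Union>i\<in>{1..P}. T i) = C \<and>
     (\<forall>i\<in>{1..P}. \<forall>yj\<in>T i. \<forall>yk\<in>T i. \<forall>n.
        mpow (xs n) yj / K \<le> mpow (xs n) yk \<and> mpow (xs n) yk \<le> K * mpow (xs n) yj) \<and>
     (\<forall>i m. i \<ge> 1 \<longrightarrow> m \<ge> 1 \<longrightarrow> i + m \<le> P \<longrightarrow>
        (\<forall>yj\<in>T i. \<forall>yk\<in>T (i + m).
           filterlim (\<lambda>n. mpow (xs n) yj / mpow (xs n) yk) at_top sequentially))"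

end

theory Submission
  imports Defs
begin

(*
  Suppose alternative (C1) fails.  Then for every n there is a point
  X n of D with a coordinate outside [1/(n+1), n+1] and a time tt n at which the
  dissipation  <f(tt n, X n), ln (X n)>  is nonnegative.  Writing  a n y = <y, ln (X n)>
  for the logarithm of the monomial (X n)^y, the dissipation equals
     sum over reactions y -> y' of  kappa * exp (a n y) * (a n y' - a n y).
  Passing to a subsequence, all differences  a n y - a n z  (y, z complexes) and all
  ln (X n i) converge in the extended reals.  Then any two complexes are either
  "comparable" (bounded log-difference) or one "dominates" the other (log-difference
  tending to infinity); dominance is a strict weak order, so its levels are the tiers
  T 1, ..., T P of a partition of the complexes along the sequence.  A complex of the top
  tier cannot dominate any of its reaction products: the corresponding term of the
  dissipation would be a large negative multiple of exp (a n y) that the remaining terms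
  cannot compensate, contradicting nonnegativity.  Hence T 1 is closed under reactions,
  and by weak reversibility it is a union of linkage classes.  Finally some coordinate
  must tend to 0 or infinity, since otherwise all ln (X n i) stay bounded, which is
  incompatible with the escaping coordinates.
*)

lemma ereal_convergent_trichotomy:
  fixes f :: "nat \<Rightarrow> real"
  assumes "(\<lambda>n. ereal (f n)) \<longlonglongrightarrow> l"
  shows "filterlim f at_top sequentially \<or> (\<exists>B. \<forall>n. \<bar>f n\<bar> \<le> B) \<or> filterlim f at_bot sequentially"
proof (cases l)
  case (real c)
  with assms have "f \<longlonglongrightarrow> c" by simp
  then have "Bseq f" by (rule convergent_imp_Bseq[OF convergentI])
  then show ?thesis unfolding Bseq_def by auto
qed (use assms ereal_tendsto_simps2[of f] in \<open>auto simp: comp_def\<close>)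

text \<open>Finitely many sequences in the compact space of extended reals have a common
  subsequence along which all of them converge.\<close>
lemma common_convergent_subsequence:
  fixes g :: "'s \<Rightarrow> nat \<Rightarrow> ereal"
  assumes "finite S"
  shows "\<exists>r. strict_mono r \<and> (\<forall>s\<in>S. \<exists>l. (\<lambda>n. g s (r n)) \<longlonglongrightarrow> l)"
  using assms
proof (induction S rule: finite_induct)
  case empty
  show ?case using strict_mono_id by blast
next
  case (insert s S)
  then obtain r where r: "strict_mono r" "\<forall>s\<in>S. \<exists>l. (\<lambda>n. g s (r n)) \<longlonglongrightarrow> l" by blast
  obtain l r' where r': "strict_mono r'" "((\<lambda>n. g s (r n)) \<circ> r') \<longlonglongrightarrow> l"
    using compact_complete_linorder by blast
  have "\<exists>l. (\<lambda>n. g s' (r (r' n))) \<longlonglongrightarrow> l" if "s' \<in> insert s S" for s'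
  proof (cases "s' = s")
    case False
    with that r(2) obtain l' where "(\<lambda>n. g s' (r n)) \<longlonglongrightarrow> l'" by auto
    from LIMSEQ_subseq_LIMSEQ[OF this r'(1)] show ?thesis by (auto simp: comp_def)
  qed (use r' in \<open>auto simp: comp_def\<close>)
  moreover have "strict_mono (\<lambda>n. r (r' n))"
    using strict_mono_o[OF r(1) r'(1)] by (simp add: comp_def)
  ultimately show ?case by (intro exI[of _ "\<lambda>n. r (r' n)"]) auto
qed

lemma eventually_common_upper_bound:
  fixes f :: "'s \<Rightarrow> 'a \<Rightarrow> real"
  assumes "finite S" "\<forall>s\<in>S. \<exists>B. eventually (\<lambda>n. f s n \<le> B) F"
  shows "\<exists>B. eventually (\<lambda>n. \<forall>s\<in>S. f s n \<le> B) F"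
  using assms
proof (induction S rule: finite_induct)
  case (insert s S)
  then obtain B where B: "eventually (\<lambda>n. \<forall>s\<in>S. f s n \<le> B) F" by auto
  from insert.prems obtain B' where B': "eventually (\<lambda>n. f s n \<le> B') F" by auto
  have "eventually (\<lambda>n. \<forall>s'\<in>insert s S. f s' n \<le> max B B') F"
    using B B' by eventually_elim (auto simp: le_max_iff_disj)
  then show ?case by blast
qed simp

lemma common_bound:
  fixes f :: "'s \<Rightarrow> 'a \<Rightarrow> real"
  assumes "finite S" "\<forall>s\<in>S. \<exists>B. \<forall>n. \<bar>f s n\<bar> \<le> B"
  shows "\<exists>B. \<forall>s\<in>S. \<forall>n. \<bar>f s n\<bar> \<le> B"
proof -
  have "\<exists>B. \<forall>n. \<forall>s\<in>S. \<bar>f s n\<bar> \<le> B"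
    using eventually_common_upper_bound[of S "\<lambda>s n. \<bar>f s n\<bar>" "principal UNIV"] assms
    by (simp add: eventually_principal)
  then show ?thesis by blast
qed

section \<open>Strict weak orders and their levels\<close>

text \<open>A partition of C into the nonempty, pairwise disjoint tiers T 1, ..., T P; this is the
  combinatorial part of the definition of being partitioned along a sequence.\<close>
definition tier_partition :: "'c set \<Rightarrow> nat \<Rightarrow> (nat \<Rightarrow> 'c set) \<Rightarrow> bool" where
  "tier_partition C P T \<longleftrightarrow> P \<ge> 1 \<and> (\<forall>i\<in>{1..P}. T i \<noteq> {}) \<and>
     (\<forall>i\<in>{1..P}. \<forall>j\<in>{1..P}. i \<noteq> j \<longrightarrow> T i \<inter> T j = {}) \<and> (\<Union>i\<in>{1..P}. T i) = C"

lemma level_set_tiers: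
  fixes k :: "'c \<Rightarrow> 'b::linorder"
  assumes fin: "finite C" and ne: "C \<noteq> {}"
  obtains P T where "tier_partition C P T"
    "\<And>i y z. i \<in> {1..P} \<Longrightarrow> y \<in> T i \<Longrightarrow> z \<in> T i \<Longrightarrow> k y = k z"
    "\<And>i j y z. 1 \<le> i \<Longrightarrow> i < j \<Longrightarrow> j \<le> P \<Longrightarrow> y \<in> T i \<Longrightarrow> z \<in> T j \<Longrightarrow> k y < k z"
    "\<And>y z. y \<in> T 1 \<Longrightarrow> z \<in> C \<Longrightarrow> k y \<le> k z"
proof -
  define ks where "ks = sorted_list_of_set (k ` C)"
  define T where "T i = {y \<in> C. k y = ks ! (i - 1)}" for i
  have set_ks: "set ks = k ` C" and sorted_ks: "sorted_wrt (<) ks" and "distinct ks"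
    using fin unfolding ks_def by auto
  have level_index: "\<exists>i\<in>{1..length ks}. y \<in> T i" if "y \<in> C" for y
  proof -
    from that set_ks obtain j where "j < length ks" "ks ! j = k y" by (metis imageI in_set_conv_nth)
    with that show ?thesis unfolding T_def by (intro bexI[of _ "Suc j"]) auto
  qed
  have "tier_partition C (length ks) T"
    unfolding tier_partition_def
  proof (intro conjI ballI impI)
    show "1 \<le> length ks" using ne set_ks by (cases ks) auto
    show "T i \<noteq> {}" if "i \<in> {1..length ks}" for i
    proof -
      have "ks ! (i - 1) \<in> set ks" using that by (intro nth_mem) auto
      then show ?thesis unfolding set_ks T_def by auto
    qed
    show "T i \<inter> T j = {}" if "i \<in> {1..length ks}" "j \<in> {1..length ks}" "i \<noteq> j" for i j
      using that \<open>distinct ks\<close> unfolding T_def by (auto simp: nth_eq_iff_index_eq)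
    show "(\<Union>i\<in>{1..length ks}. T i) = C" using level_index unfolding T_def by blast
  qed
  moreover have "k y = k z" if "y \<in> T i" "z \<in> T i" for i y z
    using that unfolding T_def by simp
  moreover have less: "k y < k z"
    if "1 \<le> i" "i < j" "j \<le> length ks" "y \<in> T i" "z \<in> T j" for i j y z
    using that sorted_wrt_nth_less[OF sorted_ks, of "i - 1" "j - 1"] unfolding T_def by auto
  moreover have "k y \<le> k z" if y: "y \<in> T 1" and z: "z \<in> C" for y z
  proof -
    obtain j where "j \<in> {1..length ks}" "z \<in> T j" using level_index[OF z] ..
    then show ?thesis using y less[of 1 j y z] unfolding T_def by (cases "j = 1") auto
  qed
  ultimately show thesis by (rule that)
qed

text \<open>A strict weak order on a finite set (an irreflexive transitive relation Up whose
  incomparability is the symmetric relation Fin compatible with Up) is ranked by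
  a natural number: the number of elements above a given one.\<close>
lemma rank_of_strict_weak_order:
  fixes Up Fin :: "'c \<Rightarrow> 'c \<Rightarrow> bool"
  assumes fin: "finite C"
    and trichotomy: "\<And>y z. y \<in> C \<Longrightarrow> z \<in> C \<Longrightarrow> Up y z \<or> Fin y z \<or> Up z y"
    and irrefl: "\<And>y. \<not> Up y y"
    and trans: "\<And>w y z. Up w y \<Longrightarrow> Up y z \<Longrightarrow> Up w z"
    and compat: "\<And>w y z. Up w y \<Longrightarrow> Fin y z \<Longrightarrow> Up w z"
    and sym: "\<And>y z. Fin y z \<Longrightarrow> Fin z y"
  shows "\<exists>k :: 'c \<Rightarrow> nat. \<forall>y\<in>C. \<forall>z\<in>C. (Up y z \<longleftrightarrow> k y < k z) \<and> (Fin y z \<longleftrightarrow> k y = k z)"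
proof -
  define k where "k y = card {w \<in> C. Up w y}" for y
  have up_less: "k y < k z" if "y \<in> C" "Up y z" for y z
  proof -
    have "{w \<in> C. Up w y} \<subset> {w \<in> C. Up w z}" using that trans irrefl by blast
    then show ?thesis unfolding k_def using fin by (intro psubset_card_mono) auto
  qed
  have fin_eq: "k y = k z" if "Fin y z" for y z
  proof -
    have "{w \<in> C. Up w y} = {w \<in> C. Up w z}" using that compat sym by blast
    then show ?thesis unfolding k_def by simp
  qed
  have "(Up y z \<longleftrightarrow> k y < k z) \<and> (Fin y z \<longleftrightarrow> k y = k z)" if "y \<in> C" "z \<in> C" for y z
    using trichotomy[OF that] up_less[of y z] up_less[of z y] fin_eq[of y z] that by auto
  then show ?thesis by blast
qed

section \<open>Asymptotic comparison of log-monomials\<close>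

definition dominates :: "(nat \<Rightarrow> 'c \<Rightarrow> real) \<Rightarrow> 'c \<Rightarrow> 'c \<Rightarrow> bool" where
  "dominates a y z \<longleftrightarrow> filterlim (\<lambda>n. a n y - a n z) at_top sequentially"

definition comparable :: "(nat \<Rightarrow> 'c \<Rightarrow> real) \<Rightarrow> 'c \<Rightarrow> 'c \<Rightarrow> bool" where
  "comparable a y z \<longleftrightarrow> (\<exists>B. \<forall>n. \<bar>a n y - a n z\<bar> \<le> B)"

text \<open>Dominance is irreflexive and transitive, also across comparable indices, and
  comparability is symmetric: the axioms of a strict weak order.\<close>
lemma dominates_irrefl: "\<not> dominates a y y"
  unfolding dominates_def by (simp add: filterlim_at_top) (metis linorder_not_le zero_less_one)

lemma dominates_trans: "dominates a w y \<Longrightarrow> dominates a y z \<Longrightarrow> dominates a w z"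
  unfolding dominates_def using filterlim_at_top_add_at_top by fastforce

lemma dominates_comparable_trans:
  assumes "dominates a w y" "comparable a y z"
  shows "dominates a w z"
proof -
  obtain B where B: "\<And>n. \<bar>a n y - a n z\<bar> \<le> B" using assms(2) unfolding comparable_def by blast
  have "- B + (a n w - a n y) \<le> a n w - a n z" for n
    using abs_le_D2[OF B[of n]] by linarith
  then have "eventually (\<lambda>n. - B + (a n w - a n y) \<le> a n w - a n z) sequentially"
    by (intro always_eventually allI)
  moreover have "filterlim (\<lambda>n. - B + (a n w - a n y)) at_top sequentially"
    using assms(1) unfolding dominates_def by (rule filterlim_tendsto_add_at_top[OF tendsto_const])
  ultimately show ?thesis unfolding dominates_def by (rule filterlim_at_top_mono[rotated])
qed

lemma comparable_sym: "comparable a y z \<Longrightarrow> comparable a z y"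
  unfolding comparable_def by (simp add: abs_minus_commute)

lemma dominance_trichotomy:
  assumes "(\<lambda>n. ereal (a n y - a n z)) \<longlonglongrightarrow> l"
  shows "dominates a y z \<or> comparable a y z \<or> dominates a z y"
proof -
  have "filterlim (\<lambda>n. - (a n y - a n z)) at_top sequentially"
    if "filterlim (\<lambda>n. a n y - a n z) at_bot sequentially"
    using that by (simp add: filterlim_uminus_at_top)
  then show ?thesis
    using ereal_convergent_trichotomy[OF assms]
    unfolding dominates_def comparable_def by auto
qed

lemma not_dominated_imp_bounded:
  assumes "(\<lambda>n. ereal (a n y - a n z)) \<longlonglongrightarrow> l" "\<not> dominates a z y"
  shows "\<exists>B. eventually (\<lambda>n. a n z - a n y \<le> B) sequentially"
  using dominance_trichotomy[OF assms(1)] assms(2)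
proof (elim disjE)
  assume "dominates a y z"
  then have "eventually (\<lambda>n. 0 \<le> a n y - a n z) sequentially"
    unfolding dominates_def filterlim_at_top by blast
  then show ?thesis by (intro exI[of _ 0]) (auto elim: eventually_mono)
next
  assume "comparable a y z"
  then obtain B where "\<And>n. \<bar>a n y - a n z\<bar> \<le> B" unfolding comparable_def by blast
  then show ?thesis by (intro exI[of _ B] always_eventually) (force simp: abs_le_iff)
qed auto

lemma asymptotic_tiers:
  fixes a :: "nat \<Rightarrow> 'c \<Rightarrow> real"
  assumes fin: "finite C" and ne: "C \<noteq> {}"
    and conv: "\<And>y z. y \<in> C \<Longrightarrow> z \<in> C \<Longrightarrow> \<exists>l. (\<lambda>n. ereal (a n y - a n z)) \<longlonglongrightarrow> l"
  obtains P T where "tier_partition C P T"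
    "\<And>i y z. i \<in> {1..P} \<Longrightarrow> y \<in> T i \<Longrightarrow> z \<in> T i \<Longrightarrow> comparable a y z"
    "\<And>i j y z. 1 \<le> i \<Longrightarrow> i < j \<Longrightarrow> j \<le> P \<Longrightarrow> y \<in> T i \<Longrightarrow> z \<in> T j \<Longrightarrow> dominates a y z"
    "\<And>y z. y \<in> T 1 \<Longrightarrow> z \<in> C \<Longrightarrow> \<not> dominates a z y"
proof -
  have "\<exists>k :: 'c \<Rightarrow> nat. \<forall>y\<in>C. \<forall>z\<in>C.
      (dominates a y z \<longleftrightarrow> k y < k z) \<and> (comparable a y z \<longleftrightarrow> k y = k z)"
  proof (rule rank_of_strict_weak_order[OF fin])
    show "dominates a y z \<or> comparable a y z \<or> dominates a z y" if "y \<in> C" "z \<in> C" for y z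
      using conv[OF that] dominance_trichotomy[of a y z] by blast
    show "\<not> dominates a y y" for y by (rule dominates_irrefl)
    show "dominates a w z" if "dominates a w y" "dominates a y z" for w y z
      using that by (rule dominates_trans)
    show "dominates a w z" if "dominates a w y" "comparable a y z" for w y z
      using that by (rule dominates_comparable_trans)
    show "comparable a z y" if "comparable a y z" for y z
      using that by (rule comparable_sym)
  qed
  then obtain k :: "'c \<Rightarrow> nat" where
    k_up: "\<And>y z. y \<in> C \<Longrightarrow> z \<in> C \<Longrightarrow> dominates a y z \<longleftrightarrow> k y < k z" and
    k_eq: "\<And>y z. y \<in> C \<Longrightarrow> z \<in> C \<Longrightarrow> comparable a y z \<longleftrightarrow> k y = k z"
    by blast
  obtain P T where T: "tier_partition C P T"
    "\<And>i y z. i \<in> {1..P} \<Longrightarrow> y \<in> T i \<Longrightarrow> z \<in> T i \<Longrightarrow> k y = k z"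
    "\<And>i j y z. 1 \<le> i \<Longrightarrow> i < j \<Longrightarrow> j \<le> P \<Longrightarrow> y \<in> T i \<Longrightarrow> z \<in> T j \<Longrightarrow> k y < k z"
    "\<And>y z. y \<in> T 1 \<Longrightarrow> z \<in> C \<Longrightarrow> k y \<le> k z"
    using level_set_tiers[OF fin ne] by blast
  have in_C: "y \<in> C" if "i \<in> {1..P}" "y \<in> T i" for i y
    using T(1) that unfolding tier_partition_def by blast
  have top: "\<not> dominates a z y" if "y \<in> T 1" "z \<in> C" for y z
  proof -
    have "1 \<in> {1..P}" using T(1) unfolding tier_partition_def by simp
    then show ?thesis using k_up[of z y] T(4)[OF that] in_C that by fastforce
  qed
  show thesis
  proof (rule that[OF T(1) _ _ top])
    show "comparable a y z" if "i \<in> {1..P}" "y \<in> T i" "z \<in> T i" for i y z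
      using T(2)[OF that] k_eq in_C that by blast
    show "dominates a y z" if "1 \<le> i" "i < j" "j \<le> P" "y \<in> T i" "z \<in> T j" for i j y z
      using T(3)[OF that] k_up in_C[of i y] in_C[of j z] that by auto
  qed
qed

section \<open>The dissipation estimate\<close>

lemma exp_mult_gap_le: "exp u * (v - u) \<le> exp (v :: real)"
proof -
  have "v - u \<le> exp (v - u)" using exp_ge_add_one_self[of "v - u"] by linarith
  then have "exp u * (v - u) \<le> exp u * exp (v - u)" by (intro mult_left_mono) auto
  then show ?thesis by (simp add: exp_diff)
qed

text \<open>Bound on the dissipation sum (in logarithmic coordinates a) when the reactant y0 of
  the reaction y0 -> y1 dominates all products up to the factor exp B and a y1 \<le> a y0:
  the reaction y0 -> y1 contributes at most eta exp (a y0) (a y1 - a y0), every other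
  reaction at most exp (B + a y0) / eta.\<close>
lemma dissipation_sum_bound:
  fixes a :: "'c \<Rightarrow> real" and k :: "'c \<times> 'c \<Rightarrow> real"
  assumes fin: "finite R" and y01: "(y0, y1) \<in> R" and eta: "\<eta> > 0"
    and rates: "\<And>r. r \<in> R \<Longrightarrow> \<eta> < k r \<and> k r < 1 / \<eta>"
    and products: "\<And>r. r \<in> R \<Longrightarrow> a (snd r) - a y0 \<le> B"
    and drop: "a y1 \<le> a y0"
  shows "(\<Sum>r\<in>R. k r * exp (a (fst r)) * (a (snd r) - a (fst r)))
           \<le> exp (a y0) * (\<eta> * (a y1 - a y0) + card R * exp B / \<eta>)"
proof -
  let ?t = "\<lambda>r. k r * exp (a (fst r)) * (a (snd r) - a (fst r))"
  have main: "?t (y0, y1) \<le> exp (a y0) * (\<eta> * (a y1 - a y0))"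
  proof -
    have "(k (y0, y1) - \<eta>) * exp (a y0) * (a y1 - a y0) \<le> 0"
      using rates[OF y01] drop by (intro mult_nonneg_nonpos) auto
    then show ?thesis by (simp add: algebra_simps)
  qed
  have other: "?t r \<le> exp (a y0) * (exp B / \<eta>)" if "r \<in> R" for r
  proof -
    have kr: "0 < k r" "k r \<le> 1 / \<eta>" using rates[OF that] eta by auto
    have "?t r \<le> k r * exp (a (snd r))"
      using exp_mult_gap_le[of "a (fst r)" "a (snd r)"] kr by (simp add: mult.assoc)
    also have "\<dots> \<le> (1 / \<eta>) * exp (B + a y0)"
      using kr products[OF that] eta by (intro mult_mono) auto
    finally show ?thesis by (simp add: exp_add field_simps)
  qed
  have "(\<Sum>r\<in>R. ?t r) = ?t (y0, y1) + (\<Sum>r\<in>R - {(y0, y1)}. ?t r)"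
    using fin y01 by (simp add: sum.remove)
  also have "\<dots> \<le> exp (a y0) * (\<eta> * (a y1 - a y0)) + card (R - {(y0, y1)}) * (exp (a y0) * (exp B / \<eta>))"
    using main other by (intro add_mono sum_bounded_above) auto
  also have "\<dots> \<le> exp (a y0) * (\<eta> * (a y1 - a y0)) + card R * (exp (a y0) * (exp B / \<eta>))"
    using fin eta by (intro add_left_mono mult_right_mono) (auto intro: card_mono)
  finally show ?thesis by (simp add: algebra_simps)
qed

lemma dissipation_eventually_negative:
  fixes a :: "nat \<Rightarrow> 'c \<Rightarrow> real" and k :: "nat \<Rightarrow> 'c \<times> 'c \<Rightarrow> real"
  assumes fin: "finite R" and y01: "(y0, y1) \<in> R" and eta: "\<eta> > 0"
    and rates: "\<And>n r. r \<in> R \<Longrightarrow> \<eta> < k n r \<and> k n r < 1 / \<eta>"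
    and products: "eventually (\<lambda>n. \<forall>r\<in>R. a n (snd r) - a n y0 \<le> B) sequentially"
    and gap: "filterlim (\<lambda>n. a n y0 - a n y1) at_top sequentially"
  shows "eventually (\<lambda>n. (\<Sum>r\<in>R. k n r * exp (a n (fst r)) * (a n (snd r) - a n (fst r))) < 0)
           sequentially"
proof -
  define G where "G = card R * exp B / \<eta> / \<eta> + 1"
  have "G > 0" unfolding G_def using eta by (simp add: add_nonneg_pos)
  from gap have "eventually (\<lambda>n. G \<le> a n y0 - a n y1) sequentially"
    by (simp add: filterlim_at_top)
  with products show ?thesis
  proof eventually_elim
    case (elim n)
    have "(\<Sum>r\<in>R. k n r * exp (a n (fst r)) * (a n (snd r) - a n (fst r)))
            \<le> exp (a n y0) * (\<eta> * (a n y1 - a n y0) + card R * exp B / \<eta>)"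
      using elim \<open>G > 0\<close> by (intro dissipation_sum_bound[OF fin y01 eta rates[where n = n]]) auto
    also have "\<dots> < 0"
    proof (rule mult_pos_neg)
      have "\<eta> * G \<le> \<eta> * (a n y0 - a n y1)" using elim eta by (intro mult_left_mono) auto
      moreover have "\<eta> * G = card R * exp B / \<eta> + \<eta>"
        using eta unfolding G_def by (simp add: field_simps)
      ultimately show "\<eta> * (a n y1 - a n y0) + card R * exp B / \<eta> < 0"
        using eta by (simp add: algebra_simps)
    qed simp
    finally show ?case .
  qed
qed

definition log_mono :: "('n::finite \<Rightarrow> real) \<Rightarrow> 'n complex \<Rightarrow> real" where
  "log_mono x y = (\<Sum>i\<in>UNIV. real (y i) * ln (x i))"

lemma mpow_eq_exp_log_mono:
  assumes "\<forall>i. x i > 0"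
  shows "mpow x y = exp (log_mono x y)"
proof -
  have pos: "mpow x y > 0" unfolding mpow_def using assms by (simp add: prod_pos)
  have "ln (mpow x y) = (\<Sum>i\<in>UNIV. ln (x i ^ y i))"
    unfolding mpow_def
    by (intro ln_prod) (auto simp: assms[rule_format, THEN less_imp_neq, symmetric])
  also have "\<dots> = log_mono x y"
    unfolding log_mono_def using assms by (simp add: ln_realpow)
  finally show ?thesis using exp_ln[OF pos] by simp
qed

lemma dissipation_log_form:
  "dotp (mass_action_field R \<kappa> t x) (\<lambda>i. ln (x i)) =
     (\<Sum>r\<in>R. \<kappa> r t * mpow x (fst r) * (log_mono x (snd r) - log_mono x (fst r)))"
proof -
  have "dotp (mass_action_field R \<kappa> t x) (\<lambda>i. ln (x i)) =
     (\<Sum>i\<in>UNIV. \<Sum>r\<in>R. \<kappa> r t * mpow x (fst r) * ((real (snd r i) - real (fst r i)) * ln (x i)))"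
    unfolding dotp_def mass_action_field_def by (simp add: sum_distrib_right mult.assoc)
  also have "\<dots> = (\<Sum>r\<in>R. \<Sum>i\<in>UNIV. \<kappa> r t * mpow x (fst r) * ((real (snd r i) - real (fst r i)) * ln (x i)))"
    by (rule sum.swap)
  also have "\<dots> = (\<Sum>r\<in>R. \<kappa> r t * mpow x (fst r) * (log_mono x (snd r) - log_mono x (fst r)))"
    unfolding log_mono_def
    by (simp add: sum_distrib_left[symmetric] sum_subtractf[symmetric] left_diff_distrib)
  finally show ?thesis .
qed

section \<open>The first tier and the partition constant\<close>

text \<open>A complex that no complex dominates cannot dominate one of its reaction products
  along a sequence of positive states with nonnegative dissipation: by the dissipation
  estimate the dissipation would eventually be negative.\<close>
lemma undominated_reactant:
  fixes xs :: "nat \<Rightarrow> 'n::finite \<Rightarrow> real"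
  defines "a \<equiv> \<lambda>n. log_mono (xs n)"
  assumes fin: "finite R" and kin: "bounded_kinetics R \<kappa> \<eta>"
    and pos: "\<And>n i. xs n i > 0" and times: "\<And>n. tt n \<ge> 0"
    and nonneg: "\<And>n. 0 \<le> dotp (mass_action_field R \<kappa> (tt n) (xs n)) (\<lambda>i. ln (xs n i))"
    and conv: "\<And>r. r \<in> R \<Longrightarrow> \<exists>l. (\<lambda>n. ereal (a n y - a n (snd r))) \<longlonglongrightarrow> l"
    and undominated: "\<And>r. r \<in> R \<Longrightarrow> \<not> dominates a (snd r) y"
    and reaction: "(y, y') \<in> R"
  shows "\<not> dominates a y y'"
proof
  assume dom: "dominates a y y'"
  have eta: "\<eta> > 0" and rates: "\<And>n r. r \<in> R \<Longrightarrow> \<eta> < \<kappa> r (tt n) \<and> \<kappa> r (tt n) < 1 / \<eta>"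
    using kin times unfolding bounded_kinetics_def by auto
  have "\<exists>B. eventually (\<lambda>n. a n (snd r) - a n y \<le> B) sequentially" if r: "r \<in> R" for r
  proof -
    obtain l where "(\<lambda>n. ereal (a n y - a n (snd r))) \<longlonglongrightarrow> l" using conv[OF r] ..
    then show ?thesis using undominated[OF r] by (rule not_dominated_imp_bounded)
  qed
  then obtain B where products: "eventually (\<lambda>n. \<forall>r\<in>R. a n (snd r) - a n y \<le> B) sequentially"
    using eventually_common_upper_bound[OF fin, where f = "\<lambda>r n. a n (snd r) - a n y"] by blast
  have dissipation: "dotp (mass_action_field R \<kappa> (tt n) (xs n)) (\<lambda>i. ln (xs n i)) =
      (\<Sum>r\<in>R. \<kappa> r (tt n) * exp (a n (fst r)) * (a n (snd r) - a n (fst r)))" for n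
    unfolding dissipation_log_form a_def using pos by (simp add: mpow_eq_exp_log_mono)
  have "eventually (\<lambda>n. dotp (mass_action_field R \<kappa> (tt n) (xs n)) (\<lambda>i. ln (xs n i)) < 0) sequentially"
    unfolding dissipation
    by (rule dissipation_eventually_negative[where k = "\<lambda>n r. \<kappa> r (tt n)",
          OF fin reaction eta rates products dom[unfolded dominates_def]])
  then obtain n where "dotp (mass_action_field R \<kappa> (tt n) (xs n)) (\<lambda>i. ln (xs n i)) < 0"
    using eventually_happens'[OF sequentially_bot] by blast
  with nonneg[of n] show False by linarith
qed

lemma closed_imp_union_of_linkage_classes:
  assumes "weakly_reversible R" "T \<noteq> {}" "T \<subseteq> C"
    and closed: "\<And>y y'. y \<in> T \<Longrightarrow> (y, y') \<in> R \<Longrightarrow> y' \<in> T"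
  shows "union_of_linkage_classes C R T"
  unfolding union_of_linkage_classes_def
proof (intro conjI ballI allI impI)
  fix y y' assume y: "y \<in> T" and "linked R y y'"
  then have "(y, y') \<in> R\<^sup>*" using assms(1) unfolding weakly_reversible_def by blast
  then show "y' \<in> T" using y by induction (auto intro: closed)
qed (use assms in auto)

text \<open>Along positive states with nonnegative dissipation, the first tier of the asymptotic
  tiers is closed under reactions: a product outside it would be dominated by the reactant,
  which no complex dominates.  By weak reversibility it is then a union of linkage classes.\<close>
lemma first_tier_union_of_linkage_classes:
  fixes xs :: "nat \<Rightarrow> 'n::finite \<Rightarrow> real"
  defines "a \<equiv> \<lambda>n. log_mono (xs n)"
  assumes net: "crn C R" and wr: "weakly_reversible R" and kin: "bounded_kinetics R \<kappa> \<eta>"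
    and pos: "\<And>n i. xs n i > 0" and times: "\<And>n. tt n \<ge> 0"
    and nonneg: "\<And>n. 0 \<le> dotp (mass_action_field R \<kappa> (tt n) (xs n)) (\<lambda>i. ln (xs n i))"
    and conv: "\<And>y z. y \<in> C \<Longrightarrow> z \<in> C \<Longrightarrow> \<exists>l. (\<lambda>n. ereal (a n y - a n z)) \<longlonglongrightarrow> l"
    and tiers: "tier_partition C P T"
    and later: "\<And>i j y z. 1 \<le> i \<Longrightarrow> i < j \<Longrightarrow> j \<le> P \<Longrightarrow> y \<in> T i \<Longrightarrow> z \<in> T j \<Longrightarrow> dominates a y z"
    and top: "\<And>y z. y \<in> T 1 \<Longrightarrow> z \<in> C \<Longrightarrow> \<not> dominates a z y"
  shows "union_of_linkage_classes C R (T 1)"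
proof (rule closed_imp_union_of_linkage_classes[OF wr])
  have fin: "finite R" and in_C: "\<And>y y'. (y, y') \<in> R \<Longrightarrow> y \<in> C \<and> y' \<in> C"
    using net unfolding crn_def by auto
  show "T 1 \<noteq> {}" "T 1 \<subseteq> C" using tiers unfolding tier_partition_def by auto
  show "y' \<in> T 1" if y: "y \<in> T 1" and reaction: "(y, y') \<in> R" for y y'
  proof (rule ccontr)
    assume "y' \<notin> T 1"
    moreover obtain j where "j \<in> {1..P}" "y' \<in> T j"
      using tiers in_C[OF reaction] unfolding tier_partition_def by blast
    ultimately have "dominates a y y'" using later[of 1 j y y'] y by (cases "j = 1") auto
    moreover have "\<exists>l. (\<lambda>n. ereal (a n y - a n (snd q))) \<longlonglongrightarrow> l" "\<not> dominates a (snd q) y"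
      if "q \<in> R" for q
      using conv top[OF y] in_C[of "fst q" "snd q"] in_C[OF reaction] that by auto
    then have "\<not> dominates a y y'"
      unfolding a_def by (rule undominated_reactant[OF fin kin pos times nonneg _ _ reaction])
    ultimately show False by contradiction
  qed
qed

text \<open>Tiers of mutually comparable log-monomials, each dominating all later ones, give
  a partition of the complexes along the sequence; the constant K comes from a common
  bound on the comparable log-differences.\<close>
lemma partitioned_along_of_tiers:
  fixes xs :: "nat \<Rightarrow> 'n::finite \<Rightarrow> real"
  defines "a \<equiv> \<lambda>n. log_mono (xs n)"
  assumes pos: "\<And>n i. xs n i > 0" and fin: "finite C" and tiers: "tier_partition C P T"
    and same: "\<And>i y z. i \<in> {1..P} \<Longrightarrow> y \<in> T i \<Longrightarrow> z \<in> T i \<Longrightarrow> comparable a y z"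
    and later: "\<And>i j y z. 1 \<le> i \<Longrightarrow> i < j \<Longrightarrow> j \<le> P \<Longrightarrow> y \<in> T i \<Longrightarrow> z \<in> T j \<Longrightarrow> dominates a y z"
  shows "\<exists>K. partitioned_along C xs P T K"
proof -
  have mpow_a: "mpow (xs n) y = exp (a n y)" for n y
    unfolding a_def using pos by (simp add: mpow_eq_exp_log_mono)
  have "\<exists>B. \<forall>p\<in>{p \<in> C \<times> C. comparable a (fst p) (snd p)}. \<forall>n. \<bar>a n (fst p) - a n (snd p)\<bar> \<le> B"
    using fin by (intro common_bound) (auto simp: comparable_def)
  then obtain B where B: "\<And>y z n. y \<in> C \<Longrightarrow> z \<in> C \<Longrightarrow> comparable a y z \<Longrightarrow> \<bar>a n y - a n z\<bar> \<le> B"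
    by (metis (no_types, lifting) SigmaI fst_conv mem_Collect_eq snd_conv)
  define K where "K = exp (\<bar>B\<bar> + 1)"
  have "K > 1" unfolding K_def by simp
  have within: "mpow (xs n) z \<le> K * mpow (xs n) y" if "i \<in> {1..P}" "y \<in> T i" "z \<in> T i" for i y z n
  proof -
    have "y \<in> C" "z \<in> C" using tiers that unfolding tier_partition_def by auto
    then have "a n z - a n y \<le> \<bar>B\<bar> + 1" using B[of z y n] same[OF that(1,3,2)] by linarith
    then have "exp (a n z) \<le> exp (\<bar>B\<bar> + 1 + a n y)" by simp
    then show ?thesis unfolding mpow_a K_def by (simp add: exp_add)
  qed
  have within_both: "mpow (xs n) y / K \<le> mpow (xs n) z \<and> mpow (xs n) z \<le> K * mpow (xs n) y"
    if "i \<in> {1..P}" "y \<in> T i" "z \<in> T i" for i y z n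
    using within[OF that] within[OF that(1,3,2), of n] \<open>K > 1\<close>
    by (simp add: pos_divide_le_eq mult.commute[of _ K])
  have between: "filterlim (\<lambda>n. mpow (xs n) y / mpow (xs n) z) at_top sequentially"
    if "1 \<le> i" "1 \<le> m" "i + m \<le> P" "y \<in> T i" "z \<in> T (i + m)" for i m y z
  proof -
    have "dominates a y z" using later[of i "i + m" y z] that by simp
    then have "filterlim (\<lambda>n. exp (a n y - a n z)) at_top sequentially"
      unfolding dominates_def by (rule filterlim_compose[OF exp_at_top])
    then show ?thesis by (simp add: mpow_a exp_diff)
  qed
  have "partitioned_along C xs P T K"
    using tiers \<open>K > 1\<close> within_both between
    unfolding partitioned_along_def tier_partition_def by auto
  then show ?thesis by blast
qed

lemma failure_of_uniform_dissipation:
  fixes f :: "real \<Rightarrow> ('n \<Rightarrow> real) \<Rightarrow> real"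
  assumes "\<not> (\<exists>M>0. \<forall>x\<in>D. (\<exists>i. x i > M \<or> x i < 1 / M) \<longrightarrow> (\<forall>t\<ge>0. f t x < 0))"
  obtains X tt where "\<And>n. X n \<in> D" "\<And>n. \<exists>i. X n i > real n + 1 \<or> X n i < 1 / (real n + 1)"
    "\<And>n. tt n \<ge> 0" "\<And>n. 0 \<le> f (tt n) (X n)"
proof -
  have "\<exists>x t. x \<in> D \<and> (\<exists>i. x i > real n + 1 \<or> x i < 1 / (real n + 1)) \<and> t \<ge> 0 \<and> 0 \<le> f t x" for n
  proof -
    have "real n + 1 > 0" by simp
    with assms show ?thesis by (meson not_less)
  qed
  then obtain X tt where "\<And>n. X n \<in> D \<and> (\<exists>i. X n i > real n + 1 \<or> X n i < 1 / (real n + 1))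
      \<and> tt n \<ge> 0 \<and> 0 \<le> f (tt n) (X n)"
    by metis
  then show thesis using that by blast
qed

lemma convergent_log_subsequence:
  fixes X :: "nat \<Rightarrow> 'n::finite \<Rightarrow> real"
  assumes "finite C"
  obtains r where "strict_mono r"
    "\<And>y z. y \<in> C \<Longrightarrow> z \<in> C \<Longrightarrow>
       \<exists>l. (\<lambda>n. ereal (log_mono (X (r n)) y - log_mono (X (r n)) z)) \<longlonglongrightarrow> l"
    "\<And>i. \<exists>l. (\<lambda>n. ereal (ln (X (r n) i))) \<longlonglongrightarrow> l"
proof -
  define g where "g = case_sum (\<lambda>p n. ereal (log_mono (X n) (fst p) - log_mono (X n) (snd p)))
                                (\<lambda>i n. ereal (ln (X n i)))"
  obtain r where r: "strict_mono r"
    and lim: "\<And>s. s \<in> Inl ` (C \<times> C) \<union> range Inr \<Longrightarrow> \<exists>l. (\<lambda>n. g s (r n)) \<longlonglongrightarrow> l"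
    using common_convergent_subsequence[of "Inl ` (C \<times> C) \<union> range Inr" g] assms by auto
  have "\<exists>l. (\<lambda>n. ereal (log_mono (X (r n)) y - log_mono (X (r n)) z)) \<longlonglongrightarrow> l"
    if "y \<in> C" "z \<in> C" for y z
    using lim[of "Inl (y, z)"] that unfolding g_def by auto
  moreover have "\<exists>l. (\<lambda>n. ereal (ln (X (r n) i))) \<longlonglongrightarrow> l" for i
    using lim[of "Inr i"] unfolding g_def by auto
  ultimately show thesis using that r by blast
qed

lemma positive_sequence_trichotomy:
  fixes x :: "nat \<Rightarrow> real"
  assumes pos: "\<And>n. x n > 0" and lim: "(\<lambda>n. ereal (ln (x n))) \<longlonglongrightarrow> l"
  shows "x \<longlonglongrightarrow> 0 \<or> filterlim x at_top sequentially \<or> (\<exists>B. \<forall>n. \<bar>ln (x n)\<bar> \<le> B)"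
proof -
  have x_exp: "(\<lambda>n. exp (ln (x n))) = x" using pos by simp
  have "filterlim (\<lambda>n. exp (ln (x n))) at_top sequentially"
    if "filterlim (\<lambda>n. ln (x n)) at_top sequentially"
    using that by (rule filterlim_compose[OF exp_at_top])
  moreover have "(\<lambda>n. exp (ln (x n))) \<longlonglongrightarrow> 0" if "filterlim (\<lambda>n. ln (x n)) at_bot sequentially"
    using that by (rule filterlim_compose[OF exp_at_bot])
  ultimately show ?thesis
    using ereal_convergent_trichotomy[OF lim] unfolding x_exp by blast
qed

lemma ln_outside_interval:
  fixes x c :: real
  assumes "x > 0" "c > 0" "x > c \<or> x < 1 / c"
  shows "ln c < \<bar>ln x\<bar>"
  using assms(3)
proof
  assume "x > c"
  then have "ln c < ln x" using assms(1,2) by (subst ln_less_cancel_iff) auto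
  then show ?thesis by linarith
next
  assume "x < 1 / c"
  then have "ln x < ln (1 / c)" using assms(1,2) by (subst ln_less_cancel_iff) auto
  then show ?thesis using assms(2) by (simp add: ln_div)
qed

text \<open>If every point of a positive sequence has a coordinate outside [1/(n+1), n+1] and the
  logarithms of all coordinates converge in the extended reals along a subsequence, then
  along that subsequence some coordinate tends to 0 or to infinity: otherwise all these
  logarithms would be bounded by a common B, which fails as soon as ln (n+1) > B.\<close>
lemma escaping_coordinate:
  fixes X :: "nat \<Rightarrow> 'n::finite \<Rightarrow> real"
  assumes pos: "\<And>n i. X n i > 0"
    and escape: "\<And>n. \<exists>i. X n i > real n + 1 \<or> X n i < 1 / (real n + 1)"
    and r: "strict_mono r"
    and conv: "\<And>i. \<exists>l. (\<lambda>n. ereal (ln (X (r n) i))) \<longlonglongrightarrow> l"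
  shows "\<exists>i. (\<lambda>n. X (r n) i) \<longlonglongrightarrow> 0 \<or> filterlim (\<lambda>n. X (r n) i) at_top sequentially"
proof (rule ccontr)
  assume no_limit: "\<not> ?thesis"
  have "\<exists>B. \<forall>n. \<bar>ln (X (r n) i)\<bar> \<le> B" for i
    using positive_sequence_trichotomy[of "\<lambda>n. X (r n) i"] pos conv[of i] no_limit by blast
  then have "\<exists>B. \<forall>i\<in>UNIV. \<forall>n. \<bar>ln (X (r n) i)\<bar> \<le> B"
    by (intro common_bound[OF finite]) simp
  then obtain B where B: "\<And>n i. \<bar>ln (X (r n) i)\<bar> \<le> B" by blast
  define n where "n = nat \<lceil>exp B\<rceil>"
  have "exp B < real (r n) + 1"
    using seq_suble[OF r, of n] unfolding n_def by linarith
  then have "ln (exp B) < ln (real (r n) + 1)" by (subst ln_less_cancel_iff) auto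
  moreover obtain i where "X (r n) i > real (r n) + 1 \<or> X (r n) i < 1 / (real (r n) + 1)"
    using escape by blast
  then have "ln (real (r n) + 1) < \<bar>ln (X (r n) i)\<bar>"
    using pos by (intro ln_outside_interval) auto
  ultimately show False using B[of n i] by simp
qed

theorem mainTheorem4:
  fixes C :: "('n::finite) complex set"
    and R :: "'n reaction set"
    and \<kappa> :: "'n reaction \<Rightarrow> real \<Rightarrow> real"
    and \<eta> :: real
    and D :: "('n \<Rightarrow> real) set"
  assumes "crn C R"
    and "weakly_reversible R"
    and "bounded_kinetics R \<kappa> \<eta>"
    and "\<forall>x\<in>D. \<forall>i. x i > 0"
  shows "(\<exists>M>0. \<forall>x\<in>D. (\<exists>i. x i > M \<or> x i < 1 / M) \<longrightarrow>
            (\<forall>t\<ge>0. dotp (mass_action_field R \<kappa> t x) (\<lambda>i. ln (x i)) < 0))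
       \<or> (\<exists>xs :: nat \<Rightarrow> 'n \<Rightarrow> real. (\<forall>n. xs n \<in> D) \<and>
            (\<exists>i. (\<lambda>n. xs n i) \<longlonglongrightarrow> 0 \<or> filterlim (\<lambda>n. xs n i) at_top sequentially) \<and>
            (\<exists>P T K. partitioned_along C xs P T K \<and> union_of_linkage_classes C R (T 1)))"
    (is "?C1 \<or> ?C2")
proof (cases ?C1)
  case False
  have fin: "finite C" and ne: "C \<noteq> {}" using assms(1) unfolding crn_def by auto
  obtain X tt where X: "\<And>n. X n \<in> D" "\<And>n. \<exists>i. X n i > real n + 1 \<or> X n i < 1 / (real n + 1)"
    "\<And>n. tt n \<ge> 0" "\<And>n. 0 \<le> dotp (mass_action_field R \<kappa> (tt n) (X n)) (\<lambda>i. ln (X n i))"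
    using failure_of_uniform_dissipation[OF False] by blast
  have pos: "\<And>n i. X n i > 0" using X(1) assms(4) by blast
  obtain r where r: "strict_mono r" and conv:
    "\<And>y z. y \<in> C \<Longrightarrow> z \<in> C \<Longrightarrow> \<exists>l. (\<lambda>n. ereal (log_mono (X (r n)) y - log_mono (X (r n)) z)) \<longlonglongrightarrow> l"
    "\<And>i. \<exists>l. (\<lambda>n. ereal (ln (X (r n) i))) \<longlonglongrightarrow> l"
    using convergent_log_subsequence[OF fin] by blast
  define xs where "xs n = X (r n)" for n
  let ?a = "\<lambda>n. log_mono (xs n)"
  obtain P T where tiers: "tier_partition C P T"
    "\<And>i y z. i \<in> {1..P} \<Longrightarrow> y \<in> T i \<Longrightarrow> z \<in> T i \<Longrightarrow> comparable ?a y z"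
    "\<And>i j y z. 1 \<le> i \<Longrightarrow> i < j \<Longrightarrow> j \<le> P \<Longrightarrow> y \<in> T i \<Longrightarrow> z \<in> T j \<Longrightarrow> dominates ?a y z"
    "\<And>y z. y \<in> T 1 \<Longrightarrow> z \<in> C \<Longrightarrow> \<not> dominates ?a z y"
    using asymptotic_tiers[where a = ?a, OF fin ne conv(1)[folded xs_def]] by blast
  have xs_pos: "\<And>n i. xs n i > 0"
    and xs_nonneg: "\<And>n. 0 \<le> dotp (mass_action_field R \<kappa> (tt (r n)) (xs n)) (\<lambda>i. ln (xs n i))"
    using pos X(4) by (simp_all add: xs_def)
  have "union_of_linkage_classes C R (T 1)"
    by (rule first_tier_union_of_linkage_classes[where xs = xs and tt = "\<lambda>n. tt (r n)",
          OF assms(1-3) xs_pos X(3) xs_nonneg conv(1)[folded xs_def] tiers(1,3,4)])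
  moreover have "\<exists>K. partitioned_along C xs P T K"
    by (rule partitioned_along_of_tiers[OF xs_pos fin tiers(1-3)])
  moreover have "\<exists>i. (\<lambda>n. xs n i) \<longlonglongrightarrow> 0 \<or> filterlim (\<lambda>n. xs n i) at_top sequentially"
    using escaping_coordinate[OF pos X(2) r conv(2)] unfolding xs_def .
  moreover have "\<forall>n. xs n \<in> D" using X(1) by (simp add: xs_def)
  ultimately show ?thesis by blast
qed simp

end
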